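(* Let $p>3$ be a prime and let $$F(p-1,p-1)=\frac{4p-3}{2^{6p-6}}\binom{4p-4}{2p-2}\binom{2p-2}{p-1}.$$ Then $F(p-1,p-1)\equiv -3p^2-12p^3+18p^3q_p(2)\pmod{p^4}$.
   Context: $q_p(2)=(2^{p-1}-1)/p$ is the Fermat quotient. (This is the value at $n=k=p-1$ of $F(n,k)=\frac{6n-2k+1}{2^{8n-2k}}\frac{\binom{2n}{n}\binom{2n+2k}{n+k}\binom{2n-2k}{n-k}\binom{n+k}{n}}{\binom{2k}{k}}$.) For rationals $a,b$, $a\equiv b\pmod{p^m}$ means $a-b=p^m c$ with $c$ a rational whose denominator is prime to $p$. *)

theory Defs
  imports Complex_Main "HOL-Computational_Algebra.Primes"
begin

definition rat_cong :: "rat \<Rightarrow> rat \<Rightarrow> nat \<Rightarrow> nat \<Rightarrow> bool" where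
  "rat_cong a b p m \<longleftrightarrow>
     (\<exists>c::rat. a - b = (of_nat p) ^ m * c \<and> coprime (snd (quotient_of c)) (int p))"

definition fermat_quot2 :: "nat \<Rightarrow> rat" where
  "fermat_quot2 p = (2 ^ (p - 1) - 1) / of_nat p"

end

theory Submission
  imports Defs "HOL-Number_Theory.Number_Theory"
begin

text \<open>Three instances of the recurrence for central binomial coefficients turn F(p-1, p-1)
  into p^2 binomial(2p, p) binomial(4p, 2p) / (4 (4p - 1) 2^(6p-6)).  Modulo p^2 the Vandermonde
  sums of squares give binomial(2p, p) = 2 and binomial(4p, 2p) = 2 + binomial(2p, p)^2 = 6, since
  all other terms are squares of multiples of p.  Writing 2^(p-1) = 1 + p q, the unit
  (4p - 1)(1 + p q)^6 is congruent to (4p - 1)(1 + 6 p q) modulo p^2, with inverse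
  6 p q - 4 p - 1; multiplying by 3 p^2 gives the claim modulo p^4.\<close>

lemma central_binomial_Suc:
  "(m + 1) * ((2 * m + 2) choose (m + 1)) = 2 * (2 * m + 1) * ((2 * m) choose m)"
proof -
  have middle: "Suc (2 * m) choose m = Suc (2 * m) choose Suc m"
    using Suc_times_binomial_add[of m m] by (simp only: mult_2 mult_cancel1) simp
  have "(m + 1) * ((2 * m + 2) choose (m + 1)) = Suc (Suc (2 * m)) * (Suc (2 * m) choose m)"
    using Suc_times_binomial[of m "Suc (2 * m)"] by simp
  also have "\<dots> = 2 * (Suc m * (Suc (2 * m) choose Suc m))"
    by (simp only: middle) simp
  also have "Suc m * (Suc (2 * m) choose Suc m) = Suc (2 * m) * ((2 * m) choose m)"
    by (rule Suc_times_binomial)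
  finally show ?thesis by simp
qed

lemma central_binomial_product:
  assumes "p \<ge> 1"
  shows "4 * (4 * p - 1)
      * ((4 * p - 3) * ((4 * p - 4) choose (2 * p - 2)) * ((2 * p - 2) choose (p - 1)))
    = p^2 * ((2 * p) choose p) * ((4 * p) choose (2 * p))"
proof -
  obtain n where p: "p = n + 1" using assms by (metis add.commute le_add_diff_inverse)
  have step_n: "(n + 1) * ((2 * n + 2) choose (n + 1)) = 2 * (2 * n + 1) * ((2 * n) choose n)"
    by (rule central_binomial_Suc)
  have step_2n1: "(2 * n + 2) * ((4 * n + 4) choose (2 * n + 2))
      = 2 * (4 * n + 3) * ((4 * n + 2) choose (2 * n + 1))"
  proof -
    have e: "2 * (2 * n + 1) = 4 * n + 2" "4 * n + 2 + 2 = 4 * n + 4" "4 * n + 2 + 1 = 4 * n + 3"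
      "2 * n + 1 + 1 = 2 * n + 2" by simp_all
    show ?thesis using central_binomial_Suc[of "2 * n + 1"] by (simp only: e)
  qed
  have step_2n: "(2 * n + 1) * ((4 * n + 2) choose (2 * n + 1))
      = 2 * (4 * n + 1) * ((4 * n) choose (2 * n))"
  proof -
    have e: "2 * (2 * n) = 4 * n" by simp
    show ?thesis using central_binomial_Suc[of "2 * n"] by (simp only: e)
  qed
  have product: "(n + 1)^2 * ((2 * n + 2) choose (n + 1)) * ((4 * n + 4) choose (2 * n + 2))
      = 4 * (4 * n + 3) * ((4 * n + 1) * ((4 * n) choose (2 * n)) * ((2 * n) choose n))"
  proof -
    have "2 * ((n + 1)^2 * ((2 * n + 2) choose (n + 1)) * ((4 * n + 4) choose (2 * n + 2)))
        = ((n + 1) * ((2 * n + 2) choose (n + 1)))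
          * ((2 * n + 2) * ((4 * n + 4) choose (2 * n + 2)))"
      by (simp add: power2_eq_square algebra_simps)
    also have "\<dots> = 4 * (4 * n + 3) * ((2 * n) choose n)
        * ((2 * n + 1) * ((4 * n + 2) choose (2 * n + 1)))"
      unfolding step_n step_2n1 by (simp only: ac_simps)
    also have "\<dots> = 2 * (4 * (4 * n + 3)
        * ((4 * n + 1) * ((4 * n) choose (2 * n)) * ((2 * n) choose n)))"
      unfolding step_2n by (simp only: ac_simps)
    finally show ?thesis by simp
  qed
  have p_arith: "4 * p - 1 = 4 * n + 3" "4 * p - 3 = 4 * n + 1" "4 * p - 4 = 4 * n"
    "2 * p - 2 = 2 * n" "p - 1 = n" "2 * p = 2 * n + 2" "4 * p = 4 * n + 4"
    using p by simp_all
  show ?thesis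
    unfolding p_arith(1-5) unfolding p_arith(6,7) unfolding p using product by (simp only: ac_simps)
qed

lemma prime_dvd_choose_self:
  assumes "prime p" "k \<noteq> 0" "k \<noteq> p"
  shows "p dvd (p choose k)"
proof (cases "k < p")
  case True
  then show ?thesis using dvd_choose_prime[of k p] assms prime_gt_0_nat by auto
next
  case False
  then show ?thesis using assms by (simp add: binomial_eq_0)
qed

lemma prime_dvd_choose_double:
  assumes "prime p" "k \<notin> {0, p, 2 * p}"
  shows "p dvd ((2 * p) choose k)"
proof -
  have "(2 * p) choose k = (\<Sum>j\<le>k. (p choose j) * (p choose (k - j)))"
    using vandermonde[of p p k] by (simp add: mult_2)
  also have "p dvd \<dots>"
  proof (rule dvd_sum)
    fix j assume "j \<in> {..k}"
    then show "p dvd (p choose j) * (p choose (k - j))"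
      using prime_dvd_choose_self[OF assms(1)] assms(2)
      by (cases "j = 0 \<or> j = p") (auto simp: dvd_mult dvd_mult2)
  qed
  finally show ?thesis .
qed

lemma cong_central_binomial_prime:
  assumes "prime p"
  shows "[(2 * p) choose p = 2] (mod p^2)"
proof -
  let ?g = "\<lambda>k. if k \<in> {0, p} then (p choose k)^2 else 0"
  have "(2 * p) choose p = (\<Sum>k\<le>p. (p choose k)^2)"
    by (simp add: choose_square_sum)
  also have "[\<dots> = (\<Sum>k\<le>p. ?g k)] (mod p^2)"
  proof (rule cong_sum)
    fix k
    show "[(p choose k)^2 = ?g k] (mod p^2)"
      using prime_dvd_choose_self[OF assms, of k]
      by (auto simp: cong_0_iff dvd_power_same)
  qed
  also have "(\<Sum>k\<le>p. ?g k) = (\<Sum>k\<in>{0, p}. ?g k)"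
    by (rule sum.mono_neutral_right) auto
  also have "\<dots> = 2"
    using prime_gt_0_nat[OF assms] by simp
  finally show ?thesis .
qed

lemma cong_central_binomial_double_prime:
  assumes "prime p"
  shows "[(4 * p) choose (2 * p) = 6] (mod p^2)"
proof -
  let ?g = "\<lambda>k. if k \<in> {0, p, 2 * p} then ((2 * p) choose k)^2 else 0"
  have "(4 * p) choose (2 * p) = (\<Sum>k\<le>2 * p. ((2 * p) choose k)^2)"
    using choose_square_sum[of "2 * p"] by simp
  also have "[\<dots> = (\<Sum>k\<le>2 * p. ?g k)] (mod p^2)"
  proof (rule cong_sum)
    fix k
    show "[((2 * p) choose k)^2 = ?g k] (mod p^2)"
      using prime_dvd_choose_double[OF assms, of k]
      by (auto simp: cong_0_iff dvd_power_same)
  qed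
  also have "(\<Sum>k\<le>2 * p. ?g k) = (\<Sum>k\<in>{0, p, 2 * p}. ?g k)"
    by (rule sum.mono_neutral_right) auto
  also have "\<dots> = 2 + ((2 * p) choose p)^2"
    using prime_gt_0_nat[OF assms] by simp
  also have "[\<dots> = 2 + 2^2] (mod p^2)"
    by (intro cong_add cong_refl cong_pow cong_central_binomial_prime assms)
  finally show ?thesis by simp
qed

lemma cong_one_plus_mult_power:
  fixes a x :: int
  shows "[(1 + a * x) ^ n = 1 + int n * a * x] (mod a^2)"
proof (induction n)
  case (Suc n)
  have "[(1 + a * x) ^ Suc n = (1 + int n * a * x) * (1 + a * x)] (mod a^2)"
    using Suc.IH by (simp add: cong_mult mult.commute)
  also have "(1 + int n * a * x) * (1 + a * x) = 1 + int (Suc n) * a * x + int n * x^2 * a^2"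
    by (simp add: algebra_simps power2_eq_square)
  also have "[\<dots> = 1 + int (Suc n) * a * x] (mod a^2)"
    by (simp add: cong_add_lcancel_0 cong_mult_self_right)
  finally show ?case .
qed simp

lemma cong_unit_inverse_mod_square:
  fixes p q :: int
  shows "[(4 * p - 1) * (1 + p * q) ^ 6 * (6 * p * q - 4 * p - 1) = 1] (mod p^2)"
proof -
  have "[(4 * p - 1) * (1 + p * q) ^ 6 * (6 * p * q - 4 * p - 1)
      = (4 * p - 1) * (1 + 6 * p * q) * (6 * p * q - 4 * p - 1)] (mod p^2)"
    using cong_one_plus_mult_power[of p q 6] by (intro cong_mult cong_refl) simp
  also have "(4 * p - 1) * (1 + 6 * p * q) * (6 * p * q - 4 * p - 1)
      = 1 + (144 * p * q^2 - 96 * p * q - 36 * q^2 + 24 * q - 16) * p^2"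
    by (simp add: algebra_simps power2_eq_square power3_eq_cube)
  also have "[\<dots> = 1] (mod p^2)"
    by (simp add: cong_add_lcancel_0 cong_mult_self_right)
  finally show ?thesis .
qed

lemma coprime_4_mult_unit:
  fixes p q :: int
  assumes "odd p"
  shows "coprime (4 * ((4 * p - 1) * (1 + p * q) ^ n)) p"
proof -
  have "coprime 4 p" using coprime_power_left_iff[of 2 2 p] assms by simp
  moreover have "coprime (4 * p - 1) p"
    using cong_imp_coprime[of "-1" "4 * p - 1" p] by (simp add: cong_iff_dvd_diff)
  moreover have "coprime (1 + p * q) p"
    using cong_imp_coprime[of 1 "1 + p * q" p] by (simp add: cong_iff_dvd_diff)
  ultimately show ?thesis by simp
qed

lemma coprime_denom_of_int_div:
  fixes k d q :: int
  assumes "coprime d q"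
  shows "coprime (snd (quotient_of (of_int k / of_int d :: rat))) q"
proof (cases "d = 0")
  case False
  obtain n e where qe: "quotient_of (of_int k / of_int d :: rat) = (n, e)"
    by (cases "quotient_of (of_int k / of_int d :: rat)")
  have "e > 0" using quotient_of_denom_pos[OF qe] .
  moreover have "(of_int k / of_int d :: rat) = of_int n / of_int e"
    using quotient_of_div[OF qe] .
  ultimately have "k * e = n * d"
    using False by (simp add: field_simps flip: of_int_mult of_int_eq_iff)
  then have "e dvd n * d" by (metis dvd_triv_right)
  then have "e dvd d"
    using quotient_of_coprime[OF qe] by (simp add: coprime_dvd_mult_right_iff coprime_commute)
  then show ?thesis using qe assms coprime_imp_coprime dvd_trans by fastforce
qed simp

lemma rat_cong_of_int_div:
  fixes x y d :: int
  assumes "[x = y] (mod int p ^ m)" and "coprime d (int p)"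
  shows "rat_cong (of_int x / of_int d) (of_int y / of_int d) p m"
proof -
  obtain k where "x - y = int p ^ m * k"
    using assms(1) by (metis cong_iff_dvd_diff dvdE)
  then have "of_int x / of_int d - of_int y / of_int d
      = of_nat p ^ m * (of_int k / of_int d :: rat)"
    by (simp add: diff_divide_distrib[symmetric] flip: of_int_diff)
  then show ?thesis
    unfolding rat_cong_def using coprime_denom_of_int_div[OF assms(2)] by blast
qed

lemma rat_cong_mult_prime_power:
  assumes "rat_cong a b p m"
  shows "rat_cong (of_nat p ^ k * a) (of_nat p ^ k * b) p (m + k)"
  using assms unfolding rat_cong_def
  by (metis (no_types, opaque_lifting) mult.assoc mult.commute power_add right_diff_distrib)

lemma cong_central_binomial_product_prime:
  fixes q :: nat
  assumes "prime p"
  shows "[int (((2 * p) choose p) * ((4 * p) choose (2 * p)))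
    = 12 * ((4 * int p - 1) * (1 + int p * int q) ^ 6) * (6 * int p * int q - 4 * int p - 1)]
    (mod int p ^ 2)"
proof -
  have "[((2 * p) choose p) * ((4 * p) choose (2 * p)) = 2 * 6] (mod p^2)"
    by (intro cong_mult cong_central_binomial_prime cong_central_binomial_double_prime assms)
  then have "[int (((2 * p) choose p) * ((4 * p) choose (2 * p))) = 12 * 1] (mod int p ^ 2)"
    by (simp flip: cong_int_iff)
  also have "[12 * 1 = 12 * ((4 * int p - 1) * (1 + int p * int q) ^ 6
      * (6 * int p * int q - 4 * int p - 1))] (mod int p ^ 2)"
    using cong_unit_inverse_mod_square[of "int p" "int q"]
    by (intro cong_mult cong_refl) (simp add: cong_sym_eq)
  finally show ?thesis by (simp only: mult.assoc)
qed

lemma binomial_expression_closed_form: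
  assumes "p \<ge> 1" and "2 ^ (p - 1) = 1 + p * q"
  shows "(of_nat (4 * p - 3) / 2 ^ (6 * p - 6)) * of_nat ((4 * p - 4) choose (2 * p - 2))
      * of_nat ((2 * p - 2) choose (p - 1))
    = of_nat p ^ 2 * (of_int (int (((2 * p) choose p) * ((4 * p) choose (2 * p))))
      / of_int (4 * ((4 * int p - 1) * (1 + int p * int q) ^ 6)) :: rat)"
proof -
  have product: "4 * (4 * of_nat p - 1)
      * ((of_nat (4 * p - 3) * of_nat ((4 * p - 4) choose (2 * p - 2)))
      * of_nat ((2 * p - 2) choose (p - 1)))
    = (of_nat p ^ 2 * of_int (int (((2 * p) choose p) * ((4 * p) choose (2 * p)))) :: rat)"
    using arg_cong[OF central_binomial_product[of p], of "of_nat :: nat \<Rightarrow> rat"] assms(1)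
    by (simp add: of_nat_diff)
  have "(2 :: rat) ^ (6 * p - 6) = of_nat (2 ^ (p - 1)) ^ 6"
    by (simp add: power_mult[symmetric] mult.commute diff_mult_distrib2)
  then have "of_int (4 * ((4 * int p - 1) * (1 + int p * int q) ^ 6))
      = 4 * (4 * of_nat p - 1) * (2 :: rat) ^ (6 * p - 6)"
    unfolding assms(2) by simp
  moreover have "c / W * Y * X = N / (a * W)"
    if "a \<noteq> 0" and "a * (c * Y * X) = N" for a c W Y X N :: rat
    using that by (auto simp: field_simps)
  ultimately show ?thesis using product assms(1) by simp
qed

lemma fermat_quot2_eq:
  assumes "p > 0" and "2 ^ (p - 1) = 1 + p * q"
  shows "fermat_quot2 p = of_nat q"
proof -
  have "(2 :: rat) ^ (p - 1) = 1 + of_nat p * of_nat q"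
    using arg_cong[OF assms(2), of "of_nat :: nat \<Rightarrow> rat"] by simp
  then show ?thesis unfolding fermat_quot2_def using assms(1) by simp
qed

lemma prime_two_power_pred_eq:
  assumes "prime p" and "p \<noteq> 2"
  obtains q where "2 ^ (p - 1) = 1 + p * q"
proof -
  have "[2 ^ (p - 1) = 1] (mod p)"
    using fermat_theorem[OF assms(1), of 2] assms primes_dvd_imp_eq two_is_prime_nat by blast
  then show ?thesis
    using that cong_le_nat[of 1 "2 ^ (p - 1)" p] by (auto simp: mult.commute)
qed

theorem lemma2p1:
  fixes p :: nat
  assumes "prime p" and "p > 3"
  shows "rat_cong
    ((of_nat (4 * p - 3) / 2 ^ (6 * p - 6)) * of_nat ((4 * p - 4) choose (2 * p - 2))
       * of_nat ((2 * p - 2) choose (p - 1)))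
    (- 3 * (of_nat p) ^ 2 - 12 * (of_nat p) ^ 3 + 18 * (of_nat p) ^ 3 * fermat_quot2 p)
    p 4"
proof -
  have p5: "p \<ge> 5"
    using assms prime_product[of "2::nat" 2] by (cases "p = 4") auto
  then have odd_p: "odd p"
    using assms(1) prime_odd_nat by auto
  obtain q where fermat: "2 ^ (p - 1) = 1 + p * q"
    using prime_two_power_pred_eq[OF assms(1)] p5 by auto
  let ?N = "((2 * p) choose p) * ((4 * p) choose (2 * p))"
  define u :: int where "u = (4 * int p - 1) * (1 + int p * int q) ^ 6"
  define v :: int where "v = 6 * int p * int q - 4 * int p - 1"
  have "u > 0"
    unfolding u_def using p5 by (intro mult_pos_pos zero_less_power) (auto intro: add_pos_nonneg)
  have "[int ?N = 12 * u * v] (mod int p ^ 2)"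
    unfolding u_def v_def by (rule cong_central_binomial_product_prime[OF assms(1)])
  moreover have "coprime (4 * u) (int p)"
    unfolding u_def using coprime_4_mult_unit[of "int p" "int q" 6] odd_p by simp
  ultimately have "rat_cong (of_nat p ^ 2 * (of_int (int ?N) / of_int (4 * u)))
      (of_nat p ^ 2 * (of_int (12 * u * v) / of_int (4 * u))) p (2 + 2)"
    by (intro rat_cong_mult_prime_power rat_cong_of_int_div)
  moreover have "(of_nat (4 * p - 3) / 2 ^ (6 * p - 6)) * of_nat ((4 * p - 4) choose (2 * p - 2))
      * of_nat ((2 * p - 2) choose (p - 1))
    = of_nat p ^ 2 * (of_int (int ?N) / of_int (4 * u) :: rat)"
    unfolding u_def using binomial_expression_closed_form[OF _ fermat] p5 by simp
  moreover have "- 3 * of_nat p ^ 2 - 12 * of_nat p ^ 3 + 18 * of_nat p ^ 3 * fermat_quot2 p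
      = of_nat p ^ 2 * (of_int (12 * u * v) / of_int (4 * u) :: rat)"
    using fermat_quot2_eq[OF _ fermat] p5 \<open>u > 0\<close> unfolding v_def
    by (simp add: field_simps power3_eq_cube power2_eq_square)
  ultimately show ?thesis
    by (simp only: numeral_plus_numeral semiring_norm)
qed

end
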